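(* Let $L \in R[x][\partial]$ have order $r>0$ and let $T$ be a desingularized operator for $L$. Write $\mathrm{lc}_\partial(T) = a g$ with $a \in R$ and $g \in R[x]$ primitive. If $k \in \mathbb{N}$ is such that $T \in M_k(L)$, then $$\mathrm{cont}(L) = \big(R[x][\partial]\cdot M_k(L)\big) : a^{\infty}.$$
   Context: $R$ is a principal ideal domain with quotient field $Q_R$. $\sigma$ is an $R$-automorphism of $R[x]$ with $\sigma(x)=\gamma x+\tau$ ($\gamma,\tau\in R$, $\gamma$ a unit), and $\delta$ is an $R$-linear $\sigma$-derivation of $R[x]$ (i.e. $\delta(fg)=\sigma(f)\delta(g)+\delta(f)g$) with $\delta(x)\in R[x]$ of degree at most $1$. $R[x][\partial]$ is the Ore algebra of polynomials in $\partial$ over $R[x]$ with multiplication determined by $\partial p=\sigma(p)\partial+\delta(p)$ for $p\in R[x]$; $\sigma,\delta$ extend to $Q_R(x)$, giving the Ore algebra $Q_R(x)[\partial]\supseteq R[x][\partial]$. For nonzero $L=\ell_r\partial^r+\dots+\ell_0$ with $\ell_i\in R[x]$, $\ell_r\neq 0$, the order is $\deg_\partial L=r$ and the leading coefficient is $\mathrm{lc}_\partial(L)=\ell_r$. A polynomial in $R[x]$ is primitive if the gcd of its coefficients is $1$; every nonzero $f\in R[x]$ is $cg$ with $c\in R$ (its content) and $g$ primitive. The contraction ideal is $\mathrm{cont}(L)=Q_R(x)[\partial]L\cap R[x][\partial]$, and $M_k(L)=\{P\in\mathrm{cont}(L): \deg_\partial P\le k\}$ (including $0$). For a left ideal $I$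 of $R[x][\partial]$ and $a\in R$, $I:a^\infty=\{P\in R[x][\partial]: a^iP\in I \text{ for some } i\in\mathbb{N}\}$; $R[x][\partial]\cdot S$ denotes the left ideal generated by $S$. Removability: for $L$ of positive order and $p\in R[x]$ dividing $\mathrm{lc}_\partial(L)$, $p$ is removable from $L$ at order $k$ if there are $P\in Q_R(x)[\partial]$ of order $k$ and $w,v\in R[x]$ with $\gcd(p,w)=1$ in $R[x]$ such that $PL\in R[x][\partial]$ and $\sigma^{-k}(\mathrm{lc}_\partial(PL))=\frac{w}{vp}\mathrm{lc}_\partial(L)$; $p$ is removable if removable at some order $k\in\mathbb{N}$, and non-removable otherwise. Desingularized operator: let $L$ have order $r>0$ and $\mathrm{lc}_\partial(L)=c\,p_1^{e_1}\cdots p_m^{e_m}$ with $c\in R$ and $p_1,\dots,p_m\in R[x]\setminus R$ irreducible and pairwise coprime. An operator $T\in R[x][\partial]$ of order $k$ is a desingularized operator for $L$ if $T\in\mathrm{cont}(L)$ and $\sigma^{r-k}(\mathrm{lc}_\partial(T))=\frac{a}{b\,p_1^{k_1}\cdots p_m^{k_m}}\mathrm{lc}_\partial(L)$ for some $a,b\in R$, $b\ne0$, and nonnegative integers $k_i$ such that $p_i^{d_i}$ is non-removable from $L$ for every integer $d_i>k_i$, $i=1,\dots,m$. *)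

theory Defs
  imports "HOL-Computational_Algebra.Polynomial" "HOL-Computational_Algebra.Fraction_Field"
          "HOL-Computational_Algebra.Factorial_Ring"
begin

definition pid :: "'a::idom itself \<Rightarrow> bool" where
  "pid _ \<longleftrightarrow> (\<forall>I::'a set. (0 \<in> I \<and> (\<forall>x\<in>I. \<forall>y\<in>I. x + y \<in> I) \<and> (\<forall>r x. x \<in> I \<longrightarrow> r * x \<in> I))
                 \<longrightarrow> (\<exists>g. I = {r * g | r. True}))"

text \<open>Embedding of R[x] into its fraction field, which is Q_R(x).\<close>
definition emb :: "'a::idom poly \<Rightarrow> 'a poly fract" where
  "emb p = Fract p 1"

definition ore_sigma :: "'a::comm_ring_1 \<Rightarrow> 'a \<Rightarrow> 'a poly \<Rightarrow> 'a poly" where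
  "ore_sigma \<gamma> \<tau> p = pcompose p [:\<tau>, \<gamma>:]"

definition map_ipow :: "('b \<Rightarrow> 'b) \<Rightarrow> int \<Rightarrow> 'b \<Rightarrow> 'b" where
  "map_ipow s n = (if n \<ge> 0 then s ^^ nat n else inv s ^^ nat (- n))"

definition ring_endo :: "('k::comm_ring_1 \<Rightarrow> 'k) \<Rightarrow> bool" where
  "ring_endo s \<longleftrightarrow> (\<forall>a b. s (a + b) = s a + s b) \<and> (\<forall>a b. s (a * b) = s a * s b) \<and> s 1 = 1"

definition sigma_derivation :: "('k::comm_ring_1 \<Rightarrow> 'k) \<Rightarrow> ('k \<Rightarrow> 'k) \<Rightarrow> bool" where
  "sigma_derivation s d \<longleftrightarrow> (\<forall>a b. d (a + b) = d a + d b) \<and> (\<forall>a b. d (a * b) = s a * d b + d a * b)"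

text \<open>Ore operators sum_i c_i D^i over a coefficient ring are represented as polynomials
  (in D) with those coefficients; dmul is left multiplication by D, ore_mult the Ore product.\<close>
definition dmul :: "('k::comm_ring_1 \<Rightarrow> 'k) \<Rightarrow> ('k \<Rightarrow> 'k) \<Rightarrow> 'k poly \<Rightarrow> 'k poly" where
  "dmul s d P = pCons 0 (map_poly s P) + map_poly d P"

definition ore_mult :: "('k::comm_ring_1 \<Rightarrow> 'k) \<Rightarrow> ('k \<Rightarrow> 'k) \<Rightarrow> 'k poly \<Rightarrow> 'k poly \<Rightarrow> 'k poly" where
  "ore_mult s d A B = (\<Sum>i\<le>degree A. smult (coeff A i) ((dmul s d ^^ i) B))"

text \<open>Standing data: gamma unit, delta an R-linear sigma-derivation of R[x] with deg delta(x) \<le> 1,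
  sQ, dQ the extensions of sigma, delta to Q_R(x) (these are unique).\<close>
definition ore_data :: "'a::idom \<Rightarrow> 'a \<Rightarrow> ('a poly \<Rightarrow> 'a poly)
     \<Rightarrow> ('a poly fract \<Rightarrow> 'a poly fract) \<Rightarrow> ('a poly fract \<Rightarrow> 'a poly fract) \<Rightarrow> bool" where
  "ore_data \<gamma> \<tau> \<delta> sQ dQ \<longleftrightarrow>
     \<gamma> dvd 1 \<and>
     sigma_derivation (ore_sigma \<gamma> \<tau>) \<delta> \<and> (\<forall>c p. \<delta> (smult c p) = smult c (\<delta> p)) \<and>
     degree (\<delta> [:0, 1:]) \<le> 1 \<and>
     ring_endo sQ \<and> sigma_derivation sQ dQ \<and>
     (\<forall>p. sQ (emb p) = emb (ore_sigma \<gamma> \<tau> p)) \<and> (\<forall>p. dQ (emb p) = emb (\<delta> p))"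

definition lift_op :: "'a::idom poly poly \<Rightarrow> 'a poly fract poly" where
  "lift_op P = map_poly emb P"

definition contraction :: "('a::idom poly fract \<Rightarrow> 'a poly fract) \<Rightarrow> ('a poly fract \<Rightarrow> 'a poly fract)
     \<Rightarrow> 'a poly poly \<Rightarrow> 'a poly poly set" where
  "contraction sQ dQ L = {P. \<exists>Q. lift_op P = ore_mult sQ dQ Q (lift_op L)}"

definition Mk :: "('a::idom poly fract \<Rightarrow> 'a poly fract) \<Rightarrow> ('a poly fract \<Rightarrow> 'a poly fract)
     \<Rightarrow> nat \<Rightarrow> 'a poly poly \<Rightarrow> 'a poly poly set" where
  "Mk sQ dQ k L = {P \<in> contraction sQ dQ L. degree P \<le> k}"

definition left_ideal_gen :: "('k::comm_ring_1 \<Rightarrow> 'k) \<Rightarrow> ('k \<Rightarrow> 'k) \<Rightarrow> 'k poly set \<Rightarrow> 'k poly set" where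
  "left_ideal_gen s d S = {P. \<exists>xs. set (map snd xs) \<subseteq> S \<and>
        P = sum_list (map (\<lambda>(Q, B). ore_mult s d Q B) xs)}"

definition saturation :: "'a::idom poly poly set \<Rightarrow> 'a \<Rightarrow> 'a poly poly set" where
  "saturation I a = {P. \<exists>i::nat. smult [:a ^ i:] P \<in> I}"

definition coprime_r :: "'a::idom poly \<Rightarrow> 'a poly \<Rightarrow> bool" where
  "coprime_r p q \<longleftrightarrow> (\<forall>c. c dvd p \<longrightarrow> c dvd q \<longrightarrow> c dvd 1)"

definition primitive :: "'a::idom poly \<Rightarrow> bool" where
  "primitive g \<longleftrightarrow> (\<forall>c. (\<forall>i. c dvd coeff g i) \<longrightarrow> c dvd 1)"

definition removable_at :: "'a::idom \<Rightarrow> 'a \<Rightarrow> ('a poly fract \<Rightarrow> 'a poly fract) \<Rightarrow> ('a poly fract \<Rightarrow> 'a poly fract)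
     \<Rightarrow> 'a poly poly \<Rightarrow> 'a poly \<Rightarrow> nat \<Rightarrow> bool" where
  "removable_at \<gamma> \<tau> sQ dQ L p k \<longleftrightarrow>
     degree L > 0 \<and> p dvd lead_coeff L \<and>
     (\<exists>P w v PL. P \<noteq> 0 \<and> degree P = k \<and> coprime_r p w \<and> v \<noteq> 0 \<and>
        lift_op PL = ore_mult sQ dQ P (lift_op L) \<and>
        emb (map_ipow (ore_sigma \<gamma> \<tau>) (- int k) (lead_coeff PL))
          = emb w / (emb v * emb p) * emb (lead_coeff L))"

definition non_removable :: "'a::idom \<Rightarrow> 'a \<Rightarrow> ('a poly fract \<Rightarrow> 'a poly fract) \<Rightarrow> ('a poly fract \<Rightarrow> 'a poly fract)
     \<Rightarrow> 'a poly poly \<Rightarrow> 'a poly \<Rightarrow> bool" where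
  "non_removable \<gamma> \<tau> sQ dQ L p \<longleftrightarrow> \<not> (\<exists>k. removable_at \<gamma> \<tau> sQ dQ L p k)"

definition desingularized :: "'a::idom \<Rightarrow> 'a \<Rightarrow> ('a poly fract \<Rightarrow> 'a poly fract) \<Rightarrow> ('a poly fract \<Rightarrow> 'a poly fract)
     \<Rightarrow> 'a poly poly \<Rightarrow> 'a poly poly \<Rightarrow> bool" where
  "desingularized \<gamma> \<tau> sQ dQ L T \<longleftrightarrow>
     degree L > 0 \<and> T \<noteq> 0 \<and> T \<in> contraction sQ dQ L \<and>
     (\<exists>c ps es. length es = length ps \<and>
        lead_coeff L = [:c:] * (\<Prod>i<length ps. (ps ! i) ^ (es ! i)) \<and>
        (\<forall>i<length ps. irreducible (ps ! i) \<and> degree (ps ! i) > 0 \<and> es ! i > 0) \<and>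
        (\<forall>i<length ps. \<forall>j<length ps. i \<noteq> j \<longrightarrow> coprime_r (ps ! i) (ps ! j)) \<and>
        (\<exists>a b ks. b \<noteq> 0 \<and> length ks = length ps \<and>
           emb (map_ipow (ore_sigma \<gamma> \<tau>) (int (degree L) - int (degree T)) (lead_coeff T))
             = emb [:a:] / (emb [:b:] * emb (\<Prod>i<length ps. (ps ! i) ^ (ks ! i))) * emb (lead_coeff L) \<and>
           (\<forall>i<length ps. \<forall>d. d > ks ! i \<longrightarrow> non_removable \<gamma> \<tau> sQ dQ L ((ps ! i) ^ d))))"

end

(* If P is in cont(L) and has order ord T + j, then the leading coefficient of P is divisible by
   sigma^j(g). Indeed, write P = Q L and W = sigma^(-ord Q)(lc P); comparing multiplicities of the
   irreducible factors p_i of lc(L) over Q_R(x), a factor occurring less often in W than in the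
   primitive polynomial sigma^(ord L - ord T)(g) would make some power p_i^n with n > k_i removable
   from L at order ord Q. Hence a P - h D^j T has lower order than P, and induction on the order puts
   a power of a times P into the left ideal generated by M_k(L). Conversely, everything in that
   left ideal lies in cont(L), and a is invertible in Q_R(x). *)
theory Submission
  imports Defs "HOL-Computational_Algebra.Polynomial_Factorial" "HOL-Computational_Algebra.Field_as_Ring"
begin

section \<open>Ore multiplication\<close>

lemma map_poly_additive:
  assumes "\<And>a b. f (a + b) = f a + f b" "f 0 = 0"
  shows "map_poly f (P + Q) = map_poly f P + map_poly f Q"
  by (intro poly_eqI) (simp add: coeff_map_poly assms)

lemma map_poly_sum_additive:
  assumes "\<And>a b. f (a + b) = f a + f b" "f 0 = 0"
  shows "map_poly f (sum g S) = (\<Sum>i\<in>S. map_poly f (g i))"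
  by (induction S rule: infinite_finite_induct) (auto simp: map_poly_additive[OF assms])

lemma smult_sum_right: "smult c (sum f S) = (\<Sum>i\<in>S. smult c (f i))"
  by (induction S rule: infinite_finite_induct) (auto simp: smult_add_right)

lemma degree_map_poly_le: "f 0 = 0 \<Longrightarrow> degree (map_poly f p) \<le> degree p"
  by (rule degree_le) (simp add: coeff_map_poly coeff_eq_0)

lemma coeff_dmul:
  assumes "s 0 = 0" "d 0 = 0"
  shows "coeff (dmul s d P) n = (if n = 0 then 0 else s (coeff P (n - 1))) + d (coeff P n)"
  using assms by (cases n) (simp_all add: dmul_def coeff_map_poly)

lemma ore_mult_eq_sum:
  assumes "degree A \<le> N"
  shows "ore_mult s d A B = (\<Sum>i\<le>N. smult (coeff A i) ((dmul s d ^^ i) B))"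
  unfolding ore_mult_def
  by (rule sum.mono_neutral_left) (use assms in \<open>auto simp: coeff_eq_0\<close>)

lemma map_poly_dmul:
  assumes "\<And>a b. f (a + b) = f a + f b" "f 0 = 0"
    and "\<And>x. f (s1 x) = s2 (f x)" "\<And>x. f (d1 x) = d2 (f x)"
    and "s1 0 = 0" "d1 0 = 0" "s2 0 = 0" "d2 0 = 0"
  shows "map_poly f (dmul s1 d1 P) = dmul s2 d2 (map_poly f P)"
  by (intro poly_eqI) (simp add: coeff_dmul assms coeff_map_poly)

lemma map_poly_ore_mult:
  assumes "\<And>a b. f (a + b) = f a + f b" "f 0 = 0" "\<And>a b. f (a * b) = f a * f b"
    and "\<And>x. f (s1 x) = s2 (f x)" "\<And>x. f (d1 x) = d2 (f x)"
    and "s1 0 = 0" "d1 0 = 0" "s2 0 = 0" "d2 0 = 0"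
  shows "map_poly f (ore_mult s1 d1 A B) = ore_mult s2 d2 (map_poly f A) (map_poly f B)"
proof -
  have pow: "map_poly f ((dmul s1 d1 ^^ i) P) = (dmul s2 d2 ^^ i) (map_poly f P)" for i P
    by (induction i) (auto simp: map_poly_dmul assms)
  have "map_poly f (ore_mult s1 d1 A B)
      = (\<Sum>i\<le>degree A. smult (f (coeff A i)) ((dmul s2 d2 ^^ i) (map_poly f B)))"
    unfolding ore_mult_def
    by (simp add: map_poly_sum_additive[OF assms(1,2)] map_poly_smult assms(2,3) pow)
  also have "\<dots> = ore_mult s2 d2 (map_poly f A) (map_poly f B)"
    by (subst ore_mult_eq_sum[OF degree_map_poly_le[of f, OF assms(2)]])
       (simp add: coeff_map_poly assms(2))
  finally show ?thesis .
qed

locale ore_ring =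
  fixes s d :: "'k::comm_ring_1 \<Rightarrow> 'k"
  assumes ring_endo: "ring_endo s" and sigma_derivation: "sigma_derivation s d"
begin

lemma s_add: "s (a + b) = s a + s b"
  and s_mult: "s (a * b) = s a * s b"
  and s_1: "s 1 = 1"
  using ring_endo by (simp_all add: ring_endo_def)

lemma d_add: "d (a + b) = d a + d b"
  and d_mult: "d (a * b) = s a * d b + d a * b"
  using sigma_derivation by (simp_all add: sigma_derivation_def)

lemma s_0: "s 0 = 0"
  using s_add[of 0 0] by simp

lemma d_0: "d 0 = 0"
  using d_add[of 0 0] by simp

lemmas coeff_dmul = coeff_dmul[of s d, OF s_0 d_0]

lemma dmul_add: "dmul s d (P + Q) = dmul s d P + dmul s d Q"
  by (intro poly_eqI) (simp add: coeff_dmul s_add d_add)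

lemma dmul_0: "dmul s d 0 = 0"
  by (intro poly_eqI) (simp add: coeff_dmul s_0 d_0)

lemma dmul_sum: "dmul s d (sum f S) = (\<Sum>i\<in>S. dmul s d (f i))"
  by (induction S rule: infinite_finite_induct) (auto simp: dmul_add dmul_0)

lemma dmul_smult: "dmul s d (smult c P) = smult (s c) (dmul s d P) + smult (d c) P"
  by (intro poly_eqI) (simp add: coeff_dmul s_add s_mult d_mult algebra_simps s_0 d_0)

lemma degree_funpow_dmul_le: "degree ((dmul s d ^^ i) P) \<le> degree P + i"
proof (induction i)
  case (Suc i)
  show ?case
    by (rule degree_le) (use Suc in \<open>auto simp: coeff_dmul coeff_eq_0 s_0 d_0\<close>)
qed simp

lemma coeff_funpow_dmul_top: "coeff ((dmul s d ^^ i) P) (degree P + i) = (s ^^ i) (lead_coeff P)"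
proof (induction i)
  case (Suc i)
  have "coeff ((dmul s d ^^ i) P) (degree P + Suc i) = 0"
    using degree_funpow_dmul_le[of i P] by (intro coeff_eq_0) simp
  then show ?case using Suc by (simp add: coeff_dmul d_0)
qed simp

lemma ore_mult_add_left: "ore_mult s d (A + A') B = ore_mult s d A B + ore_mult s d A' B"
proof -
  have "degree (A + A') \<le> max (degree A) (degree A')" by (rule degree_add_le) auto
  then show ?thesis
    by (simp add: ore_mult_eq_sum[of _ "max (degree A) (degree A')"] smult_add_left sum.distrib)
qed

lemma ore_mult_0_left: "ore_mult s d 0 B = 0"
  by (simp add: ore_mult_def)

lemma ore_mult_smult_left: "ore_mult s d (smult c A) B = smult c (ore_mult s d A B)"
  by (subst ore_mult_eq_sum[OF degree_smult_le]) (simp add: ore_mult_def smult_sum_right)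

lemma ore_mult_diff_left: "ore_mult s d (A - A') B = ore_mult s d A B - ore_mult s d A' B"
  using ore_mult_add_left[of A "- A'" B] ore_mult_smult_left[of "- 1" A' B] by simp

lemma ore_mult_sum_left: "ore_mult s d (sum f S) B = (\<Sum>i\<in>S. ore_mult s d (f i) B)"
  by (induction S rule: infinite_finite_induct) (auto simp: ore_mult_add_left ore_mult_0_left)

lemma ore_mult_monom: "ore_mult s d (monom c i) B = smult c ((dmul s d ^^ i) B)"
proof -
  have "ore_mult s d (monom c i) B = (\<Sum>j\<le>i. smult (coeff (monom c i) j) ((dmul s d ^^ j) B))"
    by (rule ore_mult_eq_sum) (simp add: degree_monom_le)
  also have "\<dots> = (\<Sum>j\<le>i. if j = i then smult c ((dmul s d ^^ j) B) else 0)"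
    by (rule sum.cong) (auto simp: coeff_monom)
  finally show ?thesis by simp
qed

lemma ore_mult_1_left: "ore_mult s d 1 B = B"
  using ore_mult_monom[of 1 0 B] by (simp add: one_pCons monom_0)

lemma ore_mult_pCons_0: "ore_mult s d (pCons 0 A) B = ore_mult s d A (dmul s d B)"
proof -
  have "ore_mult s d (pCons 0 A) B
      = (\<Sum>i\<le>Suc (degree A). smult (coeff (pCons 0 A) i) ((dmul s d ^^ i) B))"
    by (rule ore_mult_eq_sum) (simp add: degree_pCons_le)
  also have "\<dots> = (\<Sum>i\<le>degree A. smult (coeff A i) ((dmul s d ^^ Suc i) B))"
    by (subst sum.atMost_Suc_shift) simp
  finally show ?thesis by (simp add: ore_mult_def funpow_swap1)
qed

text \<open>Associativity with \<open>D\<close> as left factor; the general case follows by linearity.\<close>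
lemma dmul_ore_mult: "dmul s d (ore_mult s d A B) = ore_mult s d (dmul s d A) B"
proof -
  have "dmul s d (ore_mult s d A B) = (\<Sum>i\<le>degree A.
      smult (s (coeff A i)) ((dmul s d ^^ Suc i) B) + smult (d (coeff A i)) ((dmul s d ^^ i) B))"
    by (simp add: ore_mult_def dmul_sum dmul_smult)
  also have "\<dots> = ore_mult s d (map_poly s A) (dmul s d B) + ore_mult s d (map_poly d A) B"
    by (simp add: sum.distrib ore_mult_eq_sum[of _ "degree A"] degree_map_poly_le s_0 d_0
        coeff_map_poly funpow_swap1)
  also have "\<dots> = ore_mult s d (dmul s d A) B"
    by (simp add: dmul_def ore_mult_add_left ore_mult_pCons_0)
  finally show ?thesis .
qed

lemma ore_mult_assoc: "ore_mult s d (ore_mult s d A B) C = ore_mult s d A (ore_mult s d B C)"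
proof -
  have "ore_mult s d ((dmul s d ^^ i) B) C = (dmul s d ^^ i) (ore_mult s d B C)" for i
    by (induction i) (auto simp: dmul_ore_mult[symmetric])
  then show ?thesis
    by (simp add: ore_mult_def[of s d A B] ore_mult_sum_left ore_mult_smult_left)
       (simp add: ore_mult_def)
qed

lemma degree_ore_mult_le: "degree (ore_mult s d A B) \<le> degree A + degree B"
  unfolding ore_mult_def
proof (rule degree_sum_le)
  fix i assume "i \<in> {..degree A}"
  then show "degree (smult (coeff A i) ((dmul s d ^^ i) B)) \<le> degree A + degree B"
    using degree_funpow_dmul_le[of i B] degree_smult_le[of "coeff A i" "(dmul s d ^^ i) B"] by auto
qed simp

lemma coeff_ore_mult_top:
  "coeff (ore_mult s d A B) (degree A + degree B) = lead_coeff A * (s ^^ degree A) (lead_coeff B)"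
proof -
  have low: "coeff ((dmul s d ^^ i) B) (degree A + degree B) = 0" if "i < degree A" for i
    using degree_funpow_dmul_le[of i B] that by (intro coeff_eq_0) auto
  have "coeff (ore_mult s d A B) (degree A + degree B)
      = (\<Sum>i<Suc (degree A). coeff A i * coeff ((dmul s d ^^ i) B) (degree A + degree B))"
    by (simp add: ore_mult_def coeff_sum lessThan_Suc_atMost)
  also have "\<dots> = lead_coeff A * coeff ((dmul s d ^^ degree A) B) (degree A + degree B)"
    by (simp add: low)
  finally show ?thesis using coeff_funpow_dmul_top[of "degree A" B] by (simp add: add.commute)
qed

lemma degree_ore_mult_monom_le: "degree (ore_mult s d (monom c j) T) \<le> degree T + j"
  using degree_funpow_dmul_le[of j T] degree_smult_le[of c "(dmul s d ^^ j) T"]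
  by (auto simp: ore_mult_monom)

lemma coeff_ore_mult_monom_top:
  "coeff (ore_mult s d (monom c j) T) (degree T + j) = c * (s ^^ j) (lead_coeff T)"
  by (simp add: ore_mult_monom coeff_funpow_dmul_top)

end

lemma degree_ore_mult_field:
  fixes s d :: "'b::field \<Rightarrow> 'b"
  assumes "ore_ring s d" "A \<noteq> 0" "B \<noteq> 0"
  shows "degree (ore_mult s d A B) = degree A + degree B"
proof (rule antisym)
  interpret ore_ring s d by (fact assms(1))
  show "degree (ore_mult s d A B) \<le> degree A + degree B" by (rule degree_ore_mult_le)
  have "s x \<noteq> 0" if "x \<noteq> 0" for x :: 'b
    using s_mult[of x "inverse x"] s_1 that by auto
  then have "(s ^^ n) x \<noteq> 0" if "x \<noteq> 0" for n and x :: 'b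
    using that by (induction n) auto
  then have "coeff (ore_mult s d A B) (degree A + degree B) \<noteq> 0"
    using coeff_ore_mult_top assms(2,3) by simp
  then show "degree A + degree B \<le> degree (ore_mult s d A B)" by (rule le_degree)
qed

lemma zero_in_left_ideal_gen: "0 \<in> left_ideal_gen s d S"
  unfolding left_ideal_gen_def by (intro CollectI exI[of _ "[]"]) simp

lemma left_ideal_gen_add:
  "X \<in> left_ideal_gen s d S \<Longrightarrow> Y \<in> left_ideal_gen s d S \<Longrightarrow> X + Y \<in> left_ideal_gen s d S"
proof -
  assume "X \<in> left_ideal_gen s d S" "Y \<in> left_ideal_gen s d S"
  then obtain xs ys where "set (map snd xs) \<subseteq> S" "X = sum_list (map (\<lambda>(Q, B). ore_mult s d Q B) xs)"
    "set (map snd ys) \<subseteq> S" "Y = sum_list (map (\<lambda>(Q, B). ore_mult s d Q B) ys)"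
    unfolding left_ideal_gen_def by blast
  then show ?thesis unfolding left_ideal_gen_def by (intro CollectI exI[of _ "xs @ ys"]) auto
qed

lemma ore_mult_in_left_ideal_gen: "B \<in> S \<Longrightarrow> ore_mult s d Q B \<in> left_ideal_gen s d S"
  unfolding left_ideal_gen_def by (intro CollectI exI[of _ "[(Q, B)]"]) auto

lemma left_ideal_gen_subset:
  assumes "0 \<in> J" "\<And>X Y. X \<in> J \<Longrightarrow> Y \<in> J \<Longrightarrow> X + Y \<in> J"
    and "\<And>A X. X \<in> J \<Longrightarrow> ore_mult s d A X \<in> J" and "S \<subseteq> J"
  shows "left_ideal_gen s d S \<subseteq> J"
proof
  fix P assume "P \<in> left_ideal_gen s d S"
  then obtain xs where "set (map snd xs) \<subseteq> S" "P = sum_list (map (\<lambda>(Q, B). ore_mult s d Q B) xs)"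
    unfolding left_ideal_gen_def by blast
  then show "P \<in> J"
  proof (induction xs arbitrary: P)
    case (Cons x xs)
    obtain Q B where "x = (Q, B)" by (cases x)
    with Cons.prems Cons.IH[OF _ refl] assms(2,3,4) show ?case by auto
  qed (simp add: assms(1))
qed

section \<open>Content and primitive polynomials over a principal ideal domain\<close>

definition is_ideal :: "'a::comm_ring_1 set \<Rightarrow> bool" where
  "is_ideal I \<longleftrightarrow> 0 \<in> I \<and> (\<forall>x\<in>I. \<forall>y\<in>I. x + y \<in> I) \<and> (\<forall>r x. x \<in> I \<longrightarrow> r * x \<in> I)"

lemma pid_principal:
  assumes "pid TYPE('a::idom)" "is_ideal (I :: 'a set)"
  obtains g where "I = {r * g | r. True}"
  using assms(1) spec[of _ I] assms(2) unfolding pid_def is_ideal_def by metis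

lemma is_ideal_span2: "is_ideal {r * x + t * y | r t. True}"
  unfolding is_ideal_def
proof (intro conjI allI impI ballI)
  have "(0::'a) = 0 * x + 0 * y" by simp
  then show "0 \<in> {r * x + t * y | r t. True}" by blast
next
  fix u v assume "u \<in> {r * x + t * y | r t. True}" "v \<in> {r * x + t * y | r t. True}"
  then obtain r1 t1 r2 t2 where "u = r1 * x + t1 * y" "v = r2 * x + t2 * y" by blast
  then have "u + v = (r1 + r2) * x + (t1 + t2) * y" by (simp add: algebra_simps)
  then show "u + v \<in> {r * x + t * y | r t. True}" by blast
next
  fix c u assume "u \<in> {r * x + t * y | r t. True}"
  then obtain r1 t1 where "u = r1 * x + t1 * y" by blast
  then have "c * u = (c * r1) * x + (c * t1) * y" by (simp add: algebra_simps)
  then show "c * u \<in> {r * x + t * y | r t. True}" by blast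
qed

lemma is_ideal_principal: "is_ideal {r * x | r. True}"
  using is_ideal_span2[of x 0] by simp

lemma is_ideal_Union_chain:
  assumes "C \<noteq> {}" "\<forall>I\<in>C. is_ideal I" "\<forall>I\<in>C. \<forall>J\<in>C. I \<subseteq> J \<or> J \<subseteq> I"
  shows "is_ideal (\<Union>C)"
  unfolding is_ideal_def
proof (intro conjI ballI allI impI)
  show "0 \<in> \<Union>C" using assms(1,2) unfolding is_ideal_def by blast
  show "r * x \<in> \<Union>C" if "x \<in> \<Union>C" for r x using that assms(2) unfolding is_ideal_def by blast
  fix x y assume "x \<in> \<Union>C" "y \<in> \<Union>C"
  then obtain I J where "I \<in> C" "J \<in> C" "x \<in> I" "y \<in> J" by blast
  then have "x \<in> I \<and> y \<in> I \<or> x \<in> J \<and> y \<in> J" using assms(3) by blast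
  then show "x + y \<in> \<Union>C" using \<open>I \<in> C\<close> \<open>J \<in> C\<close> assms(2) unfolding is_ideal_def by blast
qed

lemma maximal_proper_ideal_exists:
  fixes e :: "'a::comm_ring_1"
  assumes "\<not> e dvd 1"
  obtains M where "is_ideal M" "e \<in> M" "1 \<notin> M"
    "\<And>X. is_ideal X \<Longrightarrow> M \<subseteq> X \<Longrightarrow> 1 \<notin> X \<Longrightarrow> X = M"
proof -
  define A where "A = {I. is_ideal I \<and> e \<in> I \<and> (1::'a) \<notin> I}"
  have eA: "{r * e | r. True} \<in> A"
  proof -
    have "1 \<notin> {r * e | r. True}" using assms by (auto simp: mult.commute[of _ e] dest: sym intro: dvdI)
    moreover have "e \<in> {r * e | r. True}" by (metis (mono_tags) CollectI mult_1)
    ultimately show ?thesis using is_ideal_principal[of e] unfolding A_def by blast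
  qed
  have "\<forall>C\<in>chains A. \<exists>U\<in>A. \<forall>X\<in>C. X \<subseteq> U"
  proof
    fix C assume C: "C \<in> chains A"
    show "\<exists>U\<in>A. \<forall>X\<in>C. X \<subseteq> U"
    proof (cases "C = {}")
      case False
      have "C \<subseteq> A" "\<forall>X\<in>C. \<forall>Y\<in>C. X \<subseteq> Y \<or> Y \<subseteq> X"
        using C unfolding chains_def chain_subset_def by auto
      with False have "\<Union>C \<in> A"
        using is_ideal_Union_chain[of C] unfolding A_def by auto
      then show ?thesis by blast
    qed (use eA in blast)
  qed
  from Zorn_Lemma2[OF this] obtain M where "M \<in> A" and "\<forall>X\<in>A. M \<subseteq> X \<longrightarrow> X = M"
    by blast
  with that show ?thesis unfolding A_def by blast
qed

text \<open>If \<open>\<pi> dvd a * b\<close> and \<open>\<not> \<pi> dvd a\<close>, maximality makes \<open>(\<pi>, a)\<close> the unit ideal.\<close>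
lemma generator_of_maximal_ideal_prime:
  fixes \<pi> :: "'a::comm_ring_1"
  assumes M: "M = {r * \<pi> | r. True}" "1 \<notin> M" "\<pi> \<noteq> 0"
    and max: "\<And>X. is_ideal X \<Longrightarrow> M \<subseteq> X \<Longrightarrow> 1 \<notin> X \<Longrightarrow> X = M"
  shows "prime_elem \<pi>"
proof (rule prime_elemI)
  show "\<pi> \<noteq> 0" by (fact M(3))
  show "\<not> \<pi> dvd 1" using M(1,2) by (auto elim!: dvdE simp: mult.commute)
  fix a b assume ab: "\<pi> dvd a * b"
  show "\<pi> dvd a \<or> \<pi> dvd b"
  proof (cases "\<pi> dvd a")
    case na: False
    define J where "J = {r * \<pi> + t * a | r t. True}"
    have MJ: "M \<subseteq> J"
    proof
      fix x assume "x \<in> M"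
      then obtain r where "x = r * \<pi> + 0 * a" using M(1) by auto
      then show "x \<in> J" unfolding J_def by blast
    qed
    have "a = 0 * \<pi> + 1 * a" by simp
    then have aJ: "a \<in> J" unfolding J_def by blast
    have "1 \<in> J"
    proof (rule ccontr)
      assume "1 \<notin> J"
      then have "J = M" using max[OF _ MJ] is_ideal_span2[of \<pi> a] unfolding J_def by blast
      then show False using na aJ M(1) by auto
    qed
    then obtain r t where "1 = r * \<pi> + t * a" unfolding J_def by blast
    then have "b = r * \<pi> * b + t * (a * b)" by (metis mult_1 distrib_right mult.assoc)
    moreover have "\<pi> dvd r * \<pi> * b + t * (a * b)" using ab by (simp add: dvd_add)
    ultimately show ?thesis by simp
  qed simp
qed

lemma pid_prime_divisor:
  fixes e :: "'a::idom"
  assumes "pid TYPE('a)" "e \<noteq> 0" "\<not> e dvd 1"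
  obtains \<pi> where "prime_elem \<pi>" "\<pi> dvd e"
proof -
  obtain M where M: "is_ideal M" "e \<in> M" "1 \<notin> M"
    and max: "\<And>X. is_ideal X \<Longrightarrow> M \<subseteq> X \<Longrightarrow> 1 \<notin> X \<Longrightarrow> X = M"
    using maximal_proper_ideal_exists[OF assms(3)] by blast
  obtain \<pi> where \<pi>: "M = {r * \<pi> | r. True}" using pid_principal[OF assms(1) M(1)] .
  have "\<pi> \<noteq> 0" using M(2) \<pi> assms(2) by auto
  then have "prime_elem \<pi>" using generator_of_maximal_ideal_prime[OF \<pi> M(3) _ max] by blast
  moreover have "\<pi> dvd e" using M(2) \<pi> by auto
  ultimately show ?thesis by (rule that)
qed

lemma pid_coeff_combination:
  fixes f :: "'a::idom poly"
  assumes "pid TYPE('a)"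
  obtains c \<rho> where "c = (\<Sum>i\<le>degree f. \<rho> i * coeff f i)" "\<forall>i. c dvd coeff f i"
proof -
  define I where "I = {x. \<exists>\<rho>. x = (\<Sum>i\<le>degree f. \<rho> i * coeff f i)}"
  have "is_ideal I"
    unfolding is_ideal_def I_def
  proof (intro conjI ballI allI impI)
    show "0 \<in> {x. \<exists>\<rho>. x = (\<Sum>i\<le>degree f. \<rho> i * coeff f i)}" by (auto intro!: exI[of _ "\<lambda>_. 0"])
  next
    fix x y assume "x \<in> {x. \<exists>\<rho>. x = (\<Sum>i\<le>degree f. \<rho> i * coeff f i)}"
      "y \<in> {x. \<exists>\<rho>. x = (\<Sum>i\<le>degree f. \<rho> i * coeff f i)}"
    then obtain \<rho>1 \<rho>2 where "x = (\<Sum>i\<le>degree f. \<rho>1 i * coeff f i)" "y = (\<Sum>i\<le>degree f. \<rho>2 i * coeff f i)"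
      by blast
    then show "x + y \<in> {x. \<exists>\<rho>. x = (\<Sum>i\<le>degree f. \<rho> i * coeff f i)}"
      by (auto intro!: exI[of _ "\<lambda>i. \<rho>1 i + \<rho>2 i"] simp: sum.distrib distrib_right)
  next
    fix r x assume "x \<in> {x. \<exists>\<rho>. x = (\<Sum>i\<le>degree f. \<rho> i * coeff f i)}"
    then obtain \<rho> where "x = (\<Sum>i\<le>degree f. \<rho> i * coeff f i)" by blast
    then show "r * x \<in> {x. \<exists>\<rho>. x = (\<Sum>i\<le>degree f. \<rho> i * coeff f i)}"
      by (auto intro!: exI[of _ "\<lambda>i. r * \<rho> i"] simp: sum_distrib_left mult.assoc)
  qed
  then obtain c where c: "I = {r * c | r. True}" using pid_principal[OF assms] by blast
  have "c \<in> I" using c by (auto intro!: exI[of _ 1])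
  then obtain \<rho> where \<rho>: "c = (\<Sum>i\<le>degree f. \<rho> i * coeff f i)" unfolding I_def by blast
  have "coeff f j \<in> I" for j
  proof (cases "j \<le> degree f")
    case True
    have "(\<Sum>i\<le>degree f. (if i = j then 1 else 0) * coeff f i)
        = (\<Sum>i\<le>degree f. if i = j then coeff f i else 0)"
      by (rule sum.cong) auto
    then have "coeff f j = (\<Sum>i\<le>degree f. (if i = j then 1 else 0) * coeff f i)"
      using True by simp
    then show ?thesis unfolding I_def by (intro CollectI exI[of _ "\<lambda>i. if i = j then 1 else 0"])
  next
    case False
    then show ?thesis using \<open>is_ideal I\<close> by (simp add: coeff_eq_0 is_ideal_def)
  qed
  then have "\<forall>i. c dvd coeff f i" unfolding c by (auto simp: mult.commute[of _ c] intro: dvdI)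
  with \<rho> show ?thesis by (rule that)
qed

lemma coeffs_dvd_imp_smult:
  fixes f :: "'a::idom poly"
  assumes "\<forall>i. r dvd coeff f i"
  obtains h where "f = smult r h"
proof -
  have "\<exists>h. f = smult r h"
    using assms
  proof (induction f)
    case (pCons a f)
    have "\<forall>i. r dvd coeff f i" using pCons.prems by (metis coeff_pCons_Suc)
    then obtain h where "f = smult r h" using pCons.IH by blast
    moreover have "r dvd a" using pCons.prems by (metis coeff_pCons_0)
    then obtain a' where "a = r * a'" by blast
    ultimately show ?case by (intro exI[of _ "pCons a' h"]) simp
  qed (auto intro: exI[of _ 0])
  then show ?thesis using that by blast
qed

lemma primitive_imp_nonzero: "primitive f \<Longrightarrow> f \<noteq> 0"
proof
  assume "primitive f" "f = 0"
  then have "(0::'a) dvd 1" unfolding primitive_def by simp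
  then show False by simp
qed

lemma primitive_one: "primitive 1"
  unfolding primitive_def
proof (intro allI impI)
  fix c :: 'a assume "\<forall>i. c dvd coeff 1 i"
  then have "c dvd coeff 1 0" by blast
  then show "c dvd 1" by simp
qed

lemma const_dvd_primitive_imp_unit: "primitive p \<Longrightarrow> [:r:] dvd p \<Longrightarrow> r dvd 1"
  unfolding primitive_def by (auto elim!: dvdE)

lemma pid_primitive_decomp:
  fixes f :: "'a::idom poly"
  assumes "pid TYPE('a)" "f \<noteq> 0"
  obtains c f0 where "f = smult c f0" "primitive f0" "c \<noteq> 0"
proof -
  obtain c \<rho> where c: "c = (\<Sum>i\<le>degree f. \<rho> i * coeff f i)" "\<forall>i. c dvd coeff f i"
    using pid_coeff_combination[OF assms(1)] .
  obtain f0 where f0: "f = smult c f0" using coeffs_dvd_imp_smult[OF c(2)] .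
  have "c \<noteq> 0" using f0 assms(2) by auto
  have "primitive f0" unfolding primitive_def
  proof (intro allI impI)
    fix e assume "\<forall>i. e dvd coeff f0 i"
    then have "c * e dvd (\<Sum>i\<le>degree f. \<rho> i * coeff f i)"
      using f0 by (intro dvd_sum) (simp add: mult_dvd_mono dvd_mult)
    then have "c * e dvd c * 1" using c(1) by simp
    then show "e dvd 1" using \<open>c \<noteq> 0\<close> by simp
  qed
  with f0 \<open>c \<noteq> 0\<close> show ?thesis using that by blast
qed

lemma pid_primitive_coeffs_dvd:
  fixes f :: "'a::idom poly"
  assumes "pid TYPE('a)" "primitive f" "\<forall>i. r dvd c * coeff f i"
  shows "r dvd c"
proof -
  obtain u \<rho> where u: "u = (\<Sum>i\<le>degree f. \<rho> i * coeff f i)" "\<forall>i. u dvd coeff f i"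
    using pid_coeff_combination[OF assms(1)] .
  have "u dvd 1" using u(2) assms(2) unfolding primitive_def by blast
  have "r dvd (\<Sum>i\<le>degree f. \<rho> i * (c * coeff f i))" using assms(3) by (intro dvd_sum) simp
  also have "(\<Sum>i\<le>degree f. \<rho> i * (c * coeff f i)) = c * u"
    using u(1) by (simp add: sum_distrib_left ac_simps)
  finally have "r dvd c * u" .
  moreover obtain v where "1 = u * v" using \<open>u dvd 1\<close> by blast
  then have "c = c * u * v" by (simp add: mult.assoc)
  ultimately show ?thesis by (metis dvd_mult2)
qed

text \<open>Gauss's lemma: look at the lowest coefficients of \<open>f\<close> and \<open>g\<close> not divisible by a prime
  factor of a common divisor of the coefficients of \<open>f * g\<close>.\<close>
lemma primitive_mult:
  fixes f g :: "'a::idom poly"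
  assumes "pid TYPE('a)" "primitive f" "primitive g"
  shows "primitive (f * g)"
  unfolding primitive_def
proof (intro allI impI, rule ccontr)
  fix e assume e: "\<forall>i. e dvd coeff (f * g) i" and ne: "\<not> e dvd 1"
  have "f * g \<noteq> 0" using primitive_imp_nonzero assms by auto
  have "e \<noteq> 0"
  proof
    assume "e = 0"
    then have "f * g = 0" using e by (intro poly_eqI) simp
    with \<open>f * g \<noteq> 0\<close> show False by simp
  qed
  obtain \<pi> where \<pi>: "prime_elem \<pi>" "\<pi> dvd e" using pid_prime_divisor[OF assms(1) \<open>e \<noteq> 0\<close> ne] .
  have nu: "\<not> \<pi> dvd 1" using \<pi>(1) by (rule prime_elem_not_unit)
  have "\<exists>i. \<not> \<pi> dvd coeff f i" "\<exists>i. \<not> \<pi> dvd coeff g i"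
    using assms(2,3) nu unfolding primitive_def by blast+
  then obtain i j where i: "\<not> \<pi> dvd coeff f i" "\<forall>a<i. \<pi> dvd coeff f a"
    and j: "\<not> \<pi> dvd coeff g j" "\<forall>b<j. \<pi> dvd coeff g b"
    using exists_least_iff[of "\<lambda>i. \<not> \<pi> dvd coeff f i"] exists_least_iff[of "\<lambda>i. \<not> \<pi> dvd coeff g i"]
    by blast
  have "\<pi> dvd coeff (f * g) (i + j)" using e \<pi>(2) dvd_trans by blast
  also have "coeff (f * g) (i + j)
      = coeff f i * coeff g j + (\<Sum>a\<in>{..i+j}-{i}. coeff f a * coeff g (i + j - a))"
    unfolding coeff_mult by (subst sum.remove[where x=i]) auto
  finally have sum: "\<pi> dvd coeff f i * coeff g j + (\<Sum>a\<in>{..i+j}-{i}. coeff f a * coeff g (i + j - a))" .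
  have "\<pi> dvd (\<Sum>a\<in>{..i+j}-{i}. coeff f a * coeff g (i + j - a))"
  proof (rule dvd_sum)
    fix a assume "a \<in> {..i+j}-{i}"
    then have "a < i \<or> i + j - a < j" by auto
    then show "\<pi> dvd coeff f a * coeff g (i + j - a)" using i(2) j(2) by auto
  qed
  with sum have "\<pi> dvd coeff f i * coeff g j" by (simp add: dvd_add_left_iff)
  then show False using \<pi>(1) i(1) j(1) by (simp add: prime_elem_dvd_mult_iff)
qed

lemma primitive_power: "pid TYPE('a) \<Longrightarrow> primitive (p::'a::idom poly) \<Longrightarrow> primitive (p ^ n)"
  by (induction n) (simp_all add: primitive_one primitive_mult)

lemma irreducible_imp_primitive:
  fixes p :: "'a::idom poly"
  assumes "irreducible p" "degree p > 0"
  shows "primitive p"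
  unfolding primitive_def
proof (intro allI impI)
  fix e assume "\<forall>i. e dvd coeff p i"
  then obtain h where "p = smult e h" by (rule coeffs_dvd_imp_smult)
  then have h: "p = [:e:] * h" by simp
  have "\<not> h dvd 1" using h assms(2) by (auto simp: is_unit_poly_iff split: if_splits)
  then show "e dvd 1" using irreducibleD[OF assms(1) h] by (simp add: is_unit_const_poly_iff)
qed

lemma primitive_image:
  fixes F G :: "'a::idom poly \<Rightarrow> 'a poly"
  assumes "\<And>c p. G (smult c p) = smult c (G p)" "G (F g) = g" "primitive g"
  shows "primitive (F g)"
  unfolding primitive_def
proof (intro allI impI)
  fix r assume "\<forall>i. r dvd coeff (F g) i"
  then obtain h where "F g = smult r h" by (rule coeffs_dvd_imp_smult)
  then have "g = smult r (G h)" using assms(1,2) by metis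
  then show "r dvd 1" using assms(3) unfolding primitive_def by simp
qed

section \<open>Polynomials over the fraction field\<close>

text \<open>These instances make \<open>'a fract poly\<close> a factorial ring, so that multiplicities of
  irreducible factors over \<open>Q\<^sub>R(x)\<close> are available.\<close>

instantiation fract :: (idom)
  "{unique_euclidean_ring, normalization_euclidean_semiring, normalization_semidom_multiplicative}"
begin
definition [simp]: "normalize_fract = (normalize_field :: 'a fract \<Rightarrow> _)"
definition [simp]: "unit_factor_fract = (unit_factor_field :: 'a fract \<Rightarrow> _)"
definition [simp]: "modulo_fract = (mod_field :: 'a fract \<Rightarrow> _)"
definition [simp]: "euclidean_size_fract = (euclidean_size_field :: 'a fract \<Rightarrow> _)"
definition [simp]: "division_segment (x :: 'a fract) = 1"
instance
  by standard (simp_all add: dvd_field_iff field_split_simps split: if_splits)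
end

instantiation fract :: (idom) euclidean_ring_gcd
begin
definition gcd_fract :: "'a fract \<Rightarrow> 'a fract \<Rightarrow> 'a fract" where
  "gcd_fract = Euclidean_Algorithm.gcd"
definition lcm_fract :: "'a fract \<Rightarrow> 'a fract \<Rightarrow> 'a fract" where
  "lcm_fract = Euclidean_Algorithm.lcm"
definition Gcd_fract :: "'a fract set \<Rightarrow> 'a fract" where
  "Gcd_fract = Euclidean_Algorithm.Gcd"
definition Lcm_fract :: "'a fract set \<Rightarrow> 'a fract" where
  "Lcm_fract = Euclidean_Algorithm.Lcm"
instance by standard (simp_all add: gcd_fract_def lcm_fract_def Gcd_fract_def Lcm_fract_def)
end

instance fract :: (idom) field_gcd ..

lemma degree_fract_poly: "degree (fract_poly p) = degree p"
  by (rule degree_map_poly) simp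

lemma fract_poly_power: "fract_poly (p ^ n) = fract_poly p ^ n"
  by (induction n) auto

lemma fract_poly_prod: "fract_poly (prod f A) = (\<Prod>i\<in>A. fract_poly (f i))"
  by (induction A rule: infinite_finite_induct) auto

lemma is_unit_field_poly_iff: "is_unit (A :: 'b::field poly) \<longleftrightarrow> A \<noteq> 0 \<and> degree A = 0"
  by (cases "A = 0") (auto simp: is_unit_iff_degree)

lemma fract_poly_clear_denominator:
  fixes H :: "'a::idom fract poly"
  obtains d H1 where "d \<noteq> 0" "smult (to_fract d) H = fract_poly H1"
proof -
  have "\<exists>d H1. d \<noteq> 0 \<and> smult (to_fract d) H = fract_poly H1"
  proof (induction H)
    case (pCons x H)
    then obtain d H1 where dH: "d \<noteq> 0" "smult (to_fract d) H = fract_poly H1" by blast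
    obtain n m where x: "x = Fract n m" "m \<noteq> 0" by (cases x)
    have "to_fract (d * m) * x = to_fract (d * n)"
      using x by (simp add: Fract_conv_to_fract)
    moreover have "smult (to_fract (d * m)) H = fract_poly (smult m H1)"
      using dH(2) by (simp add: mult.commute[of "to_fract d"] smult_smult[symmetric])
    ultimately have "smult (to_fract (d * m)) (pCons x H) = fract_poly (pCons (d * n) (smult m H1))"
      by (simp add: map_poly_pCons)
    moreover have "d * m \<noteq> 0" using dH x by simp
    ultimately show ?case by blast
  qed (auto intro: exI[of _ 1])
  then show ?thesis using that by blast
qed

lemma primitive_dvd_if_fract_poly_dvd:
  fixes p f :: "'a::idom poly"
  assumes pid: "pid TYPE('a)" and "primitive p" and "fract_poly p dvd fract_poly f"
  shows "p dvd f"
proof (cases "f = 0")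
  case False
  obtain H where H: "fract_poly f = fract_poly p * H" using assms(3) by blast
  obtain d H1 where dH: "d \<noteq> 0" "smult (to_fract d) H = fract_poly H1"
    by (rule fract_poly_clear_denominator)
  have "fract_poly (smult d f) = fract_poly (p * H1)"
    using H dH(2) by (simp add: mult_smult_right[symmetric])
  then have e1: "smult d f = p * H1" by (simp only: fract_poly_eq_iff)
  then have "H1 \<noteq> 0" using dH(1) False by auto
  then obtain c H0 where cH: "H1 = smult c H0" "primitive H0" "c \<noteq> 0"
    using pid_primitive_decomp[OF pid] by blast
  have e2: "smult d f = smult c (p * H0)" using e1 cH(1) by simp
  have "\<forall>i. d dvd c * coeff (p * H0) i"
  proof
    fix i
    have "d * coeff f i = c * coeff (p * H0) i" using arg_cong[OF e2, of "\<lambda>q. coeff q i"] by simp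
    then show "d dvd c * coeff (p * H0) i" by (metis dvd_triv_left)
  qed
  then have "d dvd c" using pid_primitive_coeffs_dvd[OF pid primitive_mult[OF pid assms(2) cH(2)]] by blast
  then obtain e where "c = d * e" by blast
  then have "smult d f = smult d (smult e (p * H0))" using e2 by simp
  then have "f = smult e (p * H0)" using smult_cancel[OF dH(1)] by blast
  then have "f = p * smult e H0" by simp
  then show ?thesis by (rule dvdI)
qed simp

lemma fract_poly_primitive_decomp:
  fixes A :: "'a::idom fract poly"
  assumes pid: "pid TYPE('a)" and "A \<noteq> 0"
  obtains k A0 where "A = smult k (fract_poly A0)" "primitive A0" "k \<noteq> 0"
proof -
  obtain d A1 where dA1: "d \<noteq> 0" "smult (to_fract d) A = fract_poly A1"
    by (rule fract_poly_clear_denominator)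
  then have "A1 \<noteq> 0" using \<open>A \<noteq> 0\<close> by (metis fract_poly_0 smult_eq_0_iff to_fract_eq_0_iff)
  then obtain c A0 where cA: "A1 = smult c A0" "primitive A0" "c \<noteq> 0"
    using pid_primitive_decomp[OF pid] by blast
  have "smult (to_fract d) A = smult (to_fract d) (smult (to_fract c / to_fract d) (fract_poly A0))"
    using dA1 cA(1) by simp
  then have "A = smult (to_fract c / to_fract d) (fract_poly A0)"
    using smult_cancel[of "to_fract d"] dA1(1) by simp
  moreover have "to_fract c / to_fract d \<noteq> 0" using cA(3) dA1(1) by simp
  ultimately show ?thesis using that cA(2) by blast
qed

lemma irreducible_fract_poly:
  fixes p :: "'a::idom poly"
  assumes pid: "pid TYPE('a)" and irr: "irreducible p" and deg: "degree p > 0"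
  shows "irreducible (fract_poly p)"
proof (rule irreducibleI)
  show "fract_poly p \<noteq> 0" using deg by auto
  show "\<not> is_unit (fract_poly p)" using deg by (simp add: is_unit_field_poly_iff degree_fract_poly)
  fix A B assume AB: "fract_poly p = A * B"
  show "is_unit A \<or> is_unit B"
  proof (rule ccontr)
    assume nu: "\<not> (is_unit A \<or> is_unit B)"
    have "A \<noteq> 0" "B \<noteq> 0" using AB \<open>fract_poly p \<noteq> 0\<close> by auto
    then have dA: "degree A > 0" and dB: "degree B > 0" using nu by (auto simp: is_unit_field_poly_iff)
    obtain k A0 where eA: "A = smult k (fract_poly A0)" and "primitive A0" "k \<noteq> 0"
      using fract_poly_primitive_decomp[OF pid \<open>A \<noteq> 0\<close>] .
    then have degA0: "degree A0 = degree A" by (simp add: degree_fract_poly)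
    have "A = fract_poly A0 * [:k:]" using eA by simp
    then have "fract_poly A0 dvd A" by (rule dvdI)
    also have "A dvd fract_poly p" using AB by simp
    finally obtain C where C: "p = A0 * C"
      using primitive_dvd_if_fract_poly_dvd[OF pid \<open>primitive A0\<close>] by blast
    then have "A0 dvd 1 \<or> C dvd 1" by (rule irreducibleD[OF irr])
    moreover have "A0 \<noteq> 0" "C \<noteq> 0" using C deg by auto
    moreover have "degree p = degree A + degree B"
      using AB \<open>A \<noteq> 0\<close> \<open>B \<noteq> 0\<close> by (metis degree_fract_poly degree_mult_eq)
    ultimately show False
    proof (elim disjE)
      assume "A0 dvd 1"
      then show False using degA0 dA by (auto simp: is_unit_poly_iff)
    next
      assume "C dvd 1"
      then have "degree p = degree A0" using C \<open>A0 \<noteq> 0\<close> \<open>C \<noteq> 0\<close>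
        by (auto simp: is_unit_poly_iff degree_mult_eq)
      then show False using degA0 dB \<open>degree p = degree A + degree B\<close> by simp
    qed
  qed
qed

lemma multiplicity_fract_poly_irreducible:
  fixes p :: "'a::idom poly"
  assumes pid: "pid TYPE('a)" "irreducible p" "degree p > 0" "prime q" "q dvd fract_poly p"
  shows "multiplicity (fract_poly p) = multiplicity q"
proof -
  obtain u where u: "fract_poly p = q * u" using assms(5) by blast
  have "is_unit u"
    using irreducibleD[OF irreducible_fract_poly[OF assms(1-3)] u] assms(4) by auto
  then show ?thesis
    using u multiplicity_times_unit_left[OF \<open>is_unit u\<close>, of q] by (simp add: mult.commute fun_eq_iff)
qed

section \<open>Removing factors from a ratio of polynomials\<close>

text \<open>The condition \<open>W = w / (v p) \<cdot> l\<close> with \<open>gcd(p, w) = 1\<close> of the definition of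
  removability, cleared of denominators.\<close>
definition removes_factor :: "'a::idom poly \<Rightarrow> 'a poly \<Rightarrow> 'a poly \<Rightarrow> bool" where
  "removes_factor p W l \<longleftrightarrow> p dvd l \<and> (\<exists>w v. v \<noteq> 0 \<and> coprime_r p w \<and> W * v * p = w * l)"

lemma coprime_r_power_if_not_dvd:
  fixes p w :: "'a::idom poly"
  assumes pid: "pid TYPE('a)" and irr: "irreducible p" "degree p > 0"
    and ndvd: "\<not> fract_poly p dvd fract_poly w"
  shows "coprime_r (p ^ n) w"
  unfolding coprime_r_def
proof (intro allI impI)
  fix c assume c: "c dvd p ^ n" "c dvd w"
  have "c \<noteq> 0" using c(1) irr by auto
  show "c dvd 1"
  proof (cases "degree c = 0")
    case True
    then obtain r where r: "c = [:r:]" by (elim degree_eq_zeroE)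
    have "r dvd 1"
      using const_dvd_primitive_imp_unit[OF primitive_power[OF pid irreducible_imp_primitive[OF irr]]]
        c(1) r by blast
    then show ?thesis using r by (simp add: is_unit_const_poly_iff)
  next
    case False
    then have "\<not> is_unit (fract_poly c)" by (simp add: is_unit_field_poly_iff degree_fract_poly)
    with \<open>c \<noteq> 0\<close> obtain q where q: "q dvd fract_poly c" "prime q"
      using prime_divisor_exists[of "fract_poly c"] by auto
    have "fract_poly c dvd fract_poly p ^ n" using fract_poly_dvd[OF c(1)] by (simp add: fract_poly_power)
    with q(1) have "q dvd fract_poly p ^ n" by (rule dvd_trans)
    then have "q dvd fract_poly p" by (rule prime_elem_dvd_power[OF prime_imp_prime_elem[OF q(2)]])
    then obtain u where u: "fract_poly p = q * u" by blast
    have "is_unit u"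
      using irreducibleD[OF irreducible_fract_poly[OF pid irr] u] q(2) by auto
    then have "fract_poly p dvd q" using u by (simp add: mult.commute mult_unit_dvd_iff)
    then have "fract_poly p dvd fract_poly w" using q(1) fract_poly_dvd[OF c(2)] dvd_trans by blast
    with ndvd show ?thesis by simp
  qed
qed

lemma removes_factor_prime_power:
  fixes p W l :: "'a::idom poly"
  defines "t \<equiv> multiplicity (fract_poly p) (fract_poly W)"
    and "e \<equiv> multiplicity (fract_poly p) (fract_poly l)"
  assumes pid: "pid TYPE('a)" and irr: "irreducible p" "degree p > 0"
    and "l \<noteq> 0" "W \<noteq> 0" "t \<le> e"
  shows "removes_factor (p ^ (e - t)) W l"
proof -
  have \<pi>: "\<not> is_unit (fract_poly p)"
    using irreducible_fract_poly[OF pid irr] by (simp add: irreducible_def)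
  have power_dvd: "p ^ n dvd f" if "fract_poly p ^ n dvd fract_poly f" for n f
    using that primitive_dvd_if_fract_poly_dvd[OF pid primitive_power[OF pid irreducible_imp_primitive[OF irr]]]
    by (simp add: fract_poly_power)
  obtain M where M: "l = p ^ e * M"
    using power_dvd[OF multiplicity_dvd[of "fract_poly p" "fract_poly l", folded e_def]] by blast
  obtain W' where W': "W = p ^ t * W'"
    using power_dvd[OF multiplicity_dvd[of "fract_poly p" "fract_poly W", folded t_def]] by blast
  have "\<not> fract_poly p dvd fract_poly W'"
  proof
    assume "fract_poly p dvd fract_poly W'"
    then have "fract_poly p ^ Suc t dvd fract_poly W"
      using W' by (simp add: fract_poly_power mult_dvd_mono)
    then have "Suc t \<le> t"
      using \<open>W \<noteq> 0\<close> unfolding t_def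
      by (simp add: power_dvd_iff_le_multiplicity[OF _ \<pi>] del: power_Suc)
    then show False by simp
  qed
  then have "coprime_r (p ^ (e - t)) W'" by (rule coprime_r_power_if_not_dvd[OF pid irr])
  moreover have "p ^ (e - t) dvd p ^ e" by (rule le_imp_power_dvd) simp
  then have "p ^ (e - t) dvd l" unfolding M by (rule dvd_mult2)
  moreover have "W * M * p ^ (e - t) = W' * l"
    using M W' \<open>t \<le> e\<close> by (simp add: ac_simps power_add[symmetric])
  moreover have "M \<noteq> 0" using M \<open>l \<noteq> 0\<close> by auto
  ultimately show ?thesis unfolding removes_factor_def by blast
qed

lemma prime_factor_of_factorization:
  fixes l :: "'a::idom poly"
  assumes pid: "pid TYPE('a)"
    and fac: "l = [:c:] * (\<Prod>i<length ps. (ps ! i) ^ (es ! i))"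
    and irr: "\<forall>i<length ps. irreducible (ps ! i) \<and> degree (ps ! i) > 0"
    and "l \<noteq> 0" "prime q" "q dvd fract_poly l"
  obtains i where "i < length ps" "multiplicity (fract_poly (ps ! i)) = multiplicity q"
proof -
  have "q dvd smult (to_fract c) (\<Prod>i<length ps. fract_poly (ps ! i) ^ (es ! i))"
    using assms(6) unfolding fac by (simp add: fract_poly_prod fract_poly_power)
  moreover have "to_fract c \<noteq> 0" using fac \<open>l \<noteq> 0\<close> by auto
  ultimately have "q dvd (\<Prod>i<length ps. fract_poly (ps ! i) ^ (es ! i))"
    by (rule dvd_smult_cancel)
  then have "\<exists>i\<in>{..<length ps}. q dvd fract_poly (ps ! i) ^ (es ! i)"
    by (rule iffD1[OF prime_dvd_prod_iff[OF finite_lessThan \<open>prime q\<close>]])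
  then obtain i where i: "i < length ps" "q dvd fract_poly (ps ! i) ^ (es ! i)" by blast
  from i(2) have "q dvd fract_poly (ps ! i)" by (rule prime_elem_dvd_power[OF prime_imp_prime_elem[OF \<open>prime q\<close>]])
  then have "multiplicity (fract_poly (ps ! i)) = multiplicity q"
    using multiplicity_fract_poly_irreducible[OF pid _ _ \<open>prime q\<close>] irr i(1) by simp
  with i(1) show ?thesis by (rule that)
qed

text \<open>Otherwise \<open>removes_factor_prime_power\<close> removes a power \<open>p ^ n\<close> with \<open>n > k\<close>.\<close>
lemma multiplicity_le_if_not_removes_factor:
  fixes p g W l :: "'a::idom poly"
  assumes pid: "pid TYPE('a)" and irr: "irreducible p" "degree p > 0"
    and "l \<noteq> 0" "W \<noteq> 0" and dvd: "fract_poly (p ^ k * g) dvd fract_poly l"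
    and no_removal: "\<forall>n > k. \<not> removes_factor (p ^ n) W l"
  shows "multiplicity (fract_poly p) (fract_poly g) \<le> multiplicity (fract_poly p) (fract_poly W)"
proof (rule ccontr)
  let ?\<pi> = "fract_poly p"
  assume less: "\<not> ?thesis"
  have \<pi>: "\<not> is_unit ?\<pi>" using irreducible_fract_poly[OF pid irr] by (simp add: irreducible_def)
  have "?\<pi> ^ k * ?\<pi> ^ multiplicity ?\<pi> (fract_poly g) dvd fract_poly (p ^ k * g)"
    unfolding fract_poly_mult fract_poly_power by (rule mult_dvd_mono[OF dvd_refl multiplicity_dvd])
  then have "?\<pi> ^ (k + multiplicity ?\<pi> (fract_poly g)) dvd fract_poly l"
    using dvd_trans[OF _ dvd] by (simp add: power_add)
  then have "k + multiplicity ?\<pi> (fract_poly g) \<le> multiplicity ?\<pi> (fract_poly l)"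
    using \<open>l \<noteq> 0\<close> by (simp add: power_dvd_iff_le_multiplicity[OF _ \<pi>] del: power_add)
  with less have "removes_factor (p ^ (multiplicity ?\<pi> (fract_poly l) - multiplicity ?\<pi> (fract_poly W))) W l"
    using removes_factor_prime_power[OF pid irr \<open>l \<noteq> 0\<close> \<open>W \<noteq> 0\<close>] by simp
  moreover have "multiplicity ?\<pi> (fract_poly l) - multiplicity ?\<pi> (fract_poly W) > k"
    using less \<open>k + _ \<le> _\<close> by linarith
  ultimately show False using no_removal by blast
qed

lemma primitive_dvd_if_not_removes_factor:
  fixes l W g :: "'a::idom poly"
  assumes pid: "pid TYPE('a)"
    and fac: "l = [:c:] * (\<Prod>i<length ps. (ps ! i) ^ (es ! i))"
    and irr: "\<forall>i<length ps. irreducible (ps ! i) \<and> degree (ps ! i) > 0"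
    and dvd: "(\<Prod>i<length ps. (ps ! i) ^ (ks ! i)) * g dvd smult \<alpha> l" "\<alpha> \<noteq> 0"
    and "primitive g" "l \<noteq> 0" "W \<noteq> 0"
    and no_removal: "\<forall>i<length ps. \<forall>n > ks ! i. \<not> removes_factor ((ps ! i) ^ n) W l"
  shows "g dvd W"
proof -
  have "fract_poly ((\<Prod>i<length ps. (ps ! i) ^ (ks ! i)) * g) dvd fract_poly l"
    using fract_poly_dvd[OF dvd(1)] dvd(2) by (auto dest: dvd_smult_cancel)
  note prod_dvd = this
  have bound: "multiplicity (fract_poly (ps ! i)) (fract_poly g)
      \<le> multiplicity (fract_poly (ps ! i)) (fract_poly W)" if i: "i < length ps" for i
  proof -
    have "(ps ! i) ^ (ks ! i) * g dvd (\<Prod>i<length ps. (ps ! i) ^ (ks ! i)) * g"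
      using i by (intro mult_dvd_mono dvd_prodI) auto
    then have "fract_poly ((ps ! i) ^ (ks ! i) * g) dvd fract_poly l"
      by (rule dvd_trans[OF fract_poly_dvd prod_dvd])
    moreover have "irreducible (ps ! i)" "degree (ps ! i) > 0" using irr i by auto
    moreover have "\<forall>n > ks ! i. \<not> removes_factor ((ps ! i) ^ n) W l" using no_removal i by blast
    ultimately show ?thesis
      using multiplicity_le_if_not_removes_factor[OF pid _ _ \<open>l \<noteq> 0\<close> \<open>W \<noteq> 0\<close>] by blast
  qed
  have "fract_poly g dvd fract_poly W"
  proof (rule multiplicity_le_imp_dvd)
    show "fract_poly g \<noteq> 0" using primitive_imp_nonzero[OF \<open>primitive g\<close>] by simp
    fix q :: "'a fract poly" assume q: "prime q"
    show "multiplicity q (fract_poly g) \<le> multiplicity q (fract_poly W)"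
    proof (cases "q dvd fract_poly l")
      case True
      then obtain i where "i < length ps" "multiplicity (fract_poly (ps ! i)) = multiplicity q"
        using prime_factor_of_factorization[OF pid fac irr \<open>l \<noteq> 0\<close> q] by blast
      then show ?thesis using bound[of i] by simp
    next
      case False
      moreover have "fract_poly g dvd fract_poly l"
        using \<open>fract_poly (_ * g) dvd fract_poly l\<close> by (rule dvd_trans[rotated]) simp
      ultimately have "\<not> q dvd fract_poly g" using dvd_trans by blast
      then show ?thesis by (simp add: not_dvd_imp_multiplicity_0)
    qed
  qed
  then show ?thesis by (rule primitive_dvd_if_fract_poly_dvd[OF pid \<open>primitive g\<close>])
qed

section \<open>Reduction of leading terms\<close>

context ore_ring
begin

lemma funpow_s_mult: "(s ^^ n) (a * b) = (s ^^ n) a * (s ^^ n) b"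
  by (induction n) (simp_all add: s_mult)

text \<open>Subtracting a left multiple of \<open>D ^ j T\<close> from \<open>c P\<close> cancels the leading term of \<open>c P\<close>.\<close>
lemma smult_power_in_left_ideal_gen:
  assumes diff: "\<And>X Y. X \<in> J \<Longrightarrow> Y \<in> J \<Longrightarrow> X - Y \<in> J"
    and mult: "\<And>A X. X \<in> J \<Longrightarrow> ore_mult s d A X \<in> J"
    and T: "T \<in> S" "T \<in> J" and low: "\<And>P. P \<in> J \<Longrightarrow> degree P < degree T \<Longrightarrow> P \<in> S"
    and lc: "lead_coeff T = c * t" "s c = c"
    and dvd: "\<And>P. P \<in> J \<Longrightarrow> degree T \<le> degree P \<Longrightarrow> (s ^^ (degree P - degree T)) t dvd lead_coeff P"
    and "P \<in> J"
  shows "\<exists>i. smult (c ^ i) P \<in> left_ideal_gen s d S"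
  using \<open>P \<in> J\<close>
proof (induction "degree P" arbitrary: P rule: less_induct)
  case less
  show ?case
  proof (cases "degree P < degree T")
    case True
    then have "ore_mult s d 1 P \<in> left_ideal_gen s d S"
      using less.prems low by (intro ore_mult_in_left_ideal_gen) auto
    then show ?thesis by (intro exI[of _ 0]) (simp add: ore_mult_1_left)
  next
    case False
    define j where "j = degree P - degree T"
    have j: "degree T + j = degree P" using False unfolding j_def by simp
    obtain h where h: "lead_coeff P = (s ^^ j) t * h"
      using dvd[OF less.prems] False unfolding j_def by (auto elim: dvdE)
    have "(s ^^ j) c = c" by (induction j) (simp_all add: lc(2))
    then have top: "coeff (ore_mult s d (monom h j) T) (degree P) = c * lead_coeff P"
      using coeff_ore_mult_monom_top[of h j T] unfolding j by (simp add: lc(1) h funpow_s_mult ac_simps)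
    define P' where "P' = smult c P - ore_mult s d (monom h j) T"
    have "smult c P = ore_mult s d (monom c 0) P" by (simp add: ore_mult_monom)
    then have "P' \<in> J"
      unfolding P'_def using diff[OF mult[OF less.prems] mult[OF T(2)]] by simp
    have "degree P' \<le> degree P"
      unfolding P'_def using degree_ore_mult_monom_le[of h j T] j
      by (intro degree_diff_le degree_smult_le) simp_all
    moreover have "coeff P' (degree P) = 0" unfolding P'_def by (simp add: top)
    ultimately have "P' = 0 \<or> degree P' < degree P"
    proof (cases "P' = 0")
      case False
      then have "coeff P' (degree P') \<noteq> 0" by simp
      with \<open>coeff P' (degree P) = 0\<close> have "degree P' \<noteq> degree P" by metis
      with \<open>degree P' \<le> degree P\<close> show ?thesis by simp
    qed simp
    then obtain i where i: "smult (c ^ i) P' \<in> left_ideal_gen s d S"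
    proof
      assume "P' = 0"
      then show thesis using that[of 0] zero_in_left_ideal_gen[of s d S] by simp
    qed (use less.hyps[OF _ \<open>P' \<in> J\<close>] in blast)
    have "smult (c ^ Suc i) P = smult (c ^ i) P' + ore_mult s d (smult (c ^ i) (monom h j)) T"
      unfolding P'_def by (simp add: ore_mult_smult_left smult_diff_right mult.commute)
    then have "smult (c ^ Suc i) P \<in> left_ideal_gen s d S"
      using left_ideal_gen_add[OF i ore_mult_in_left_ideal_gen[OF T(1)]] by simp
    then show ?thesis by blast
  qed
qed

end

section \<open>The automorphism \<open>\<sigma>\<close>\<close>

lemma funpow_ore_sigma_eq: "\<exists>q. ore_sigma \<gamma> \<tau> ^^ n = (\<lambda>p. pcompose p q)"
proof (induction n)
  case 0
  show ?case by (intro exI[of _ "[:0, 1:]"]) auto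
next
  case (Suc n)
  then obtain q where q: "ore_sigma \<gamma> \<tau> ^^ n = (\<lambda>p. pcompose p q)" by blast
  have "(ore_sigma \<gamma> \<tau> ^^ Suc n) p = pcompose p (pcompose q [:\<tau>, \<gamma>:])" for p
    by (simp add: q ore_sigma_def[of \<gamma> \<tau> "pcompose p q"] pcompose_assoc)
  then have "ore_sigma \<gamma> \<tau> ^^ Suc n = (\<lambda>p. pcompose p (pcompose q [:\<tau>, \<gamma>:]))"
    by (rule ext)
  then show ?case by blast
qed

lemma funpow_ore_sigma_mult:
    "(ore_sigma \<gamma> \<tau> ^^ n) (p * q) = (ore_sigma \<gamma> \<tau> ^^ n) p * (ore_sigma \<gamma> \<tau> ^^ n) q"
  and funpow_ore_sigma_smult: "(ore_sigma \<gamma> \<tau> ^^ n) (smult c p) = smult c ((ore_sigma \<gamma> \<tau> ^^ n) p)"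
  and funpow_ore_sigma_0: "(ore_sigma \<gamma> \<tau> ^^ n) 0 = 0"
  using funpow_ore_sigma_eq[of n \<gamma> \<tau>] by (auto simp: pcompose_mult pcompose_smult)

lemma ore_sigma_const: "ore_sigma \<gamma> \<tau> [:c:] = [:c:]"
  by (simp add: ore_sigma_def)

lemma ring_endo_ore_sigma: "ring_endo (ore_sigma \<gamma> \<tau>)"
  unfolding ring_endo_def ore_sigma_def by (simp add: pcompose_add pcompose_mult pcompose_1)

lemma ore_sigma_inverse:
  fixes \<gamma> \<gamma>' :: "'a::comm_ring_1"
  assumes "\<gamma> * \<gamma>' = 1"
  shows "ore_sigma \<gamma> \<tau> (ore_sigma \<gamma>' (- (\<tau> * \<gamma>')) p) = p"
    and "ore_sigma \<gamma>' (- (\<tau> * \<gamma>')) (ore_sigma \<gamma> \<tau> p) = p"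
proof -
  have "pcompose [:- (\<tau> * \<gamma>'), \<gamma>':] [:\<tau>, \<gamma>:] = [:0, 1:]"
    "pcompose [:\<tau>, \<gamma>:] [:- (\<tau> * \<gamma>'), \<gamma>':] = [:0, 1:]"
    using assms by (simp_all add: pcompose_pCons algebra_simps mult.assoc[symmetric])
  then show "ore_sigma \<gamma> \<tau> (ore_sigma \<gamma>' (- (\<tau> * \<gamma>')) p) = p"
    and "ore_sigma \<gamma>' (- (\<tau> * \<gamma>')) (ore_sigma \<gamma> \<tau> p) = p"
    by (simp_all add: ore_sigma_def pcompose_assoc[symmetric])
qed

lemma funpow_inverse_cancel:
  fixes F G :: "'b \<Rightarrow> 'b"
  assumes "\<And>x. G (F x) = x"
  shows "(G ^^ n) ((F ^^ n) x) = x"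
proof (induction n arbitrary: x)
  case (Suc n)
  have "(G ^^ Suc n) y = (G ^^ n) (G y)" for y by (simp only: funpow_Suc_right o_apply)
  then show ?case using Suc.IH assms by simp
qed simp

section \<open>Contraction ideals\<close>

lemma emb_eq_to_fract: "emb = to_fract"
  by (intro ext) (simp add: emb_def to_fract_def)

lemma lift_op_eq_fract_poly: "lift_op = fract_poly"
  by (intro ext) (simp add: lift_op_def emb_eq_to_fract)

lemma map_ipow_neg: "map_ipow s (- int m) = inv s ^^ m"
  unfolding map_ipow_def by (cases "m = 0") simp_all

locale ore_setting =
  fixes \<gamma> \<tau> :: "'a::idom" and \<delta> :: "'a poly \<Rightarrow> 'a poly"
    and sQ dQ :: "'a poly fract \<Rightarrow> 'a poly fract"
  assumes ore_data: "ore_data \<gamma> \<tau> \<delta> sQ dQ"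
begin

abbreviation \<sigma> :: "'a poly \<Rightarrow> 'a poly" where "\<sigma> \<equiv> ore_sigma \<gamma> \<tau>"

sublocale R: ore_ring \<sigma> \<delta>
  using ore_data ring_endo_ore_sigma by unfold_locales (simp_all add: ore_data_def)

sublocale Q: ore_ring sQ dQ
  using ore_data by unfold_locales (simp_all add: ore_data_def)

lemma inv_sigma: "\<exists>\<gamma>' \<tau>'. inv \<sigma> = ore_sigma \<gamma>' \<tau>'"
  and sigma_inv_sigma: "\<sigma> (inv \<sigma> p) = p"
proof -
  obtain \<gamma>' where \<gamma>': "\<gamma> * \<gamma>' = 1" using ore_data unfolding ore_data_def by (metis dvdE)
  have "inv \<sigma> = ore_sigma \<gamma>' (- (\<tau> * \<gamma>'))"
    by (rule inv_equality) (simp_all add: ore_sigma_inverse[OF \<gamma>'])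
  then show "\<exists>\<gamma>' \<tau>'. inv \<sigma> = ore_sigma \<gamma>' \<tau>'" "\<sigma> (inv \<sigma> p) = p"
    using ore_sigma_inverse[OF \<gamma>'] by auto
qed

lemma fract_poly_ore_mult:
  "fract_poly (ore_mult \<sigma> \<delta> A B) = ore_mult sQ dQ (fract_poly A) (fract_poly B)"
  using ore_data
  by (intro map_poly_ore_mult) (simp_all add: ore_data_def emb_eq_to_fract R.s_0 R.d_0 Q.s_0 Q.d_0)

lemma mem_contraction_iff:
  "P \<in> contraction sQ dQ L \<longleftrightarrow> (\<exists>Q. fract_poly P = ore_mult sQ dQ Q (fract_poly L))"
  unfolding contraction_def lift_op_eq_fract_poly by simp

lemma contraction_diff:
  "X \<in> contraction sQ dQ L \<Longrightarrow> Y \<in> contraction sQ dQ L \<Longrightarrow> X - Y \<in> contraction sQ dQ L"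
  unfolding mem_contraction_iff by (auto simp: Q.ore_mult_diff_left[symmetric])

lemma contraction_add:
  "X \<in> contraction sQ dQ L \<Longrightarrow> Y \<in> contraction sQ dQ L \<Longrightarrow> X + Y \<in> contraction sQ dQ L"
  unfolding mem_contraction_iff by (auto simp: Q.ore_mult_add_left[symmetric])

lemma ore_mult_in_contraction:
  "X \<in> contraction sQ dQ L \<Longrightarrow> ore_mult \<sigma> \<delta> A X \<in> contraction sQ dQ L"
  unfolding mem_contraction_iff by (auto simp: fract_poly_ore_mult Q.ore_mult_assoc[symmetric])

lemma left_ideal_gen_Mk_subset_contraction:
  "left_ideal_gen \<sigma> \<delta> (Mk sQ dQ k L) \<subseteq> contraction sQ dQ L"
proof (rule left_ideal_gen_subset)
  show "0 \<in> contraction sQ dQ L"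
    unfolding mem_contraction_iff by (auto intro: exI[of _ 0] simp: Q.ore_mult_0_left)
qed (auto simp: Mk_def contraction_add ore_mult_in_contraction)

lemma contraction_smult_cancel:
  assumes "smult c P \<in> contraction sQ dQ L" "c \<noteq> 0"
  shows "P \<in> contraction sQ dQ L"
proof -
  obtain Q where Q: "smult (to_fract c) (fract_poly P) = ore_mult sQ dQ Q (fract_poly L)"
    using assms(1) unfolding mem_contraction_iff by auto
  have "fract_poly P = ore_mult sQ dQ (smult (inverse (to_fract c)) Q) (fract_poly L)"
    using arg_cong[OF Q, of "smult (inverse (to_fract c))"] assms(2) by (simp add: Q.ore_mult_smult_left)
  then show ?thesis unfolding mem_contraction_iff by blast
qed

lemma saturation_Mk_subset_contraction:
  assumes "a \<noteq> 0"
  shows "saturation (left_ideal_gen \<sigma> \<delta> (Mk sQ dQ k L)) a \<subseteq> contraction sQ dQ L"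
proof
  fix P assume "P \<in> saturation (left_ideal_gen \<sigma> \<delta> (Mk sQ dQ k L)) a"
  then obtain i where "smult [:a ^ i:] P \<in> contraction sQ dQ L"
    using left_ideal_gen_Mk_subset_contraction unfolding saturation_def by blast
  then show "P \<in> contraction sQ dQ L" by (rule contraction_smult_cancel) (simp add: assms)
qed

lemma degree_ore_multiple:
  assumes "fract_poly P = ore_mult sQ dQ Q (fract_poly L)" "P \<noteq> 0" "L \<noteq> 0"
  shows "Q \<noteq> 0" "degree P = degree Q + degree L"
proof -
  show "Q \<noteq> 0" using assms(1,2) by (auto simp: Q.ore_mult_0_left)
  then have "degree (fract_poly P) = degree Q + degree (fract_poly L)"
    unfolding assms(1) using assms(3) by (intro degree_ore_mult_field) (unfold_locales, simp_all)
  then show "degree P = degree Q + degree L" by (simp add: degree_fract_poly)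
qed

end

section \<open>Desingularized operators\<close>

context ore_setting
begin

lemma removable_at_if_removes_factor:
  assumes "degree L > 0" "fract_poly P = ore_mult sQ dQ Q (fract_poly L)" "Q \<noteq> 0" "p \<noteq> 0"
    and "removes_factor p ((inv \<sigma> ^^ degree Q) (lead_coeff P)) (lead_coeff L)"
  shows "removable_at \<gamma> \<tau> sQ dQ L p (degree Q)"
proof -
  let ?W = "(inv \<sigma> ^^ degree Q) (lead_coeff P)"
  obtain w v where "p dvd lead_coeff L" "v \<noteq> 0" "coprime_r p w" and eq: "?W * v * p = w * lead_coeff L"
    using assms(5) unfolding removes_factor_def by blast
  have "to_fract ?W * (to_fract v * to_fract p) = to_fract w * to_fract (lead_coeff L)"
    using arg_cong[OF eq, of to_fract] by (simp add: mult.assoc)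
  then have "to_fract ?W = to_fract w / (to_fract v * to_fract p) * to_fract (lead_coeff L)"
    using \<open>v \<noteq> 0\<close> \<open>p \<noteq> 0\<close> by (simp add: field_simps)
  with assms(1-3) \<open>p dvd _\<close> \<open>v \<noteq> 0\<close> \<open>coprime_r p w\<close> show ?thesis
    unfolding removable_at_def
    by (intro conjI exI[of _ Q] exI[of _ w] exI[of _ v] exI[of _ P])
       (simp_all add: lift_op_eq_fract_poly emb_eq_to_fract map_ipow_neg)
qed

text \<open>The defining identity of a desingularized operator \<open>T = Q\<^sub>T L\<close>, cleared of denominators.\<close>
lemma desingularized_dvd_lead_coeff:
  assumes "desingularized \<gamma> \<tau> sQ dQ L T" "fract_poly T = ore_mult sQ dQ QT (fract_poly L)"
  obtains c ps es ks \<alpha> where "lead_coeff L = [:c:] * (\<Prod>i<length ps. (ps ! i) ^ (es ! i))"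
    "\<forall>i<length ps. irreducible (ps ! i) \<and> degree (ps ! i) > 0"
    "(\<Prod>i<length ps. (ps ! i) ^ (ks ! i)) * (inv \<sigma> ^^ degree QT) (lead_coeff T) dvd smult \<alpha> (lead_coeff L)"
    "\<alpha> \<noteq> 0" "\<forall>i<length ps. \<forall>n > ks ! i. non_removable \<gamma> \<tau> sQ dQ L ((ps ! i) ^ n)"
proof -
  obtain c ps es \<alpha> b ks where fac: "lead_coeff L = [:c:] * (\<Prod>i<length ps. (ps ! i) ^ (es ! i))"
    and irr: "\<forall>i<length ps. irreducible (ps ! i) \<and> degree (ps ! i) > 0"
    and "b \<noteq> 0"
    and eq: "to_fract (map_ipow \<sigma> (int (degree L) - int (degree T)) (lead_coeff T))
      = to_fract [:\<alpha>:] / (to_fract [:b:] * to_fract (\<Prod>i<length ps. (ps ! i) ^ (ks ! i)))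
          * to_fract (lead_coeff L)"
    and nr: "\<forall>i<length ps. \<forall>n > ks ! i. non_removable \<gamma> \<tau> sQ dQ L ((ps ! i) ^ n)"
    using assms(1) unfolding desingularized_def emb_eq_to_fract by blast
  have "T \<noteq> 0" "L \<noteq> 0" using assms(1) unfolding desingularized_def by auto
  then have "degree T = degree QT + degree L" using degree_ore_multiple[OF assms(2)] by blast
  then have ipow: "map_ipow \<sigma> (int (degree L) - int (degree T)) = inv \<sigma> ^^ degree QT"
    by (simp add: map_ipow_neg[symmetric])
  define X where "X = (inv \<sigma> ^^ degree QT) (lead_coeff T)"
  define Pk where "Pk = (\<Prod>i<length ps. (ps ! i) ^ (ks ! i))"
  have "(\<sigma> ^^ degree QT) X = lead_coeff T"
    unfolding X_def by (intro funpow_inverse_cancel sigma_inv_sigma)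
  then have "X \<noteq> 0" using \<open>T \<noteq> 0\<close> by (cases "X = 0") (auto simp: funpow_ore_sigma_0)
  have "Pk \<noteq> 0" unfolding Pk_def using irr by auto
  have "to_fract X * (to_fract [:b:] * to_fract Pk) = to_fract [:\<alpha>:] * to_fract (lead_coeff L)"
    using eq \<open>b \<noteq> 0\<close> \<open>Pk \<noteq> 0\<close> unfolding ipow X_def[symmetric] Pk_def[symmetric]
    by (simp add: field_simps)
  then have "to_fract (X * ([:b:] * Pk)) = to_fract ([:\<alpha>:] * lead_coeff L)" by (simp only: to_fract_mult)
  then have eq': "X * ([:b:] * Pk) = [:\<alpha>:] * lead_coeff L" by (simp only: to_fract_eq_iff)
  then have "\<alpha> \<noteq> 0" using \<open>X \<noteq> 0\<close> \<open>b \<noteq> 0\<close> \<open>Pk \<noteq> 0\<close> by auto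
  have "smult \<alpha> (lead_coeff L) = Pk * X * [:b:]" using eq' by (simp add: ac_simps)
  then have "Pk * X dvd smult \<alpha> (lead_coeff L)" by (metis dvd_triv_left)
  then show ?thesis using that fac irr \<open>\<alpha> \<noteq> 0\<close> nr unfolding Pk_def X_def by blast
qed

text \<open>Otherwise some \<open>p\<^sub>i ^ n\<close> with \<open>n > k\<^sub>i\<close> would be removable from \<open>L\<close> at order
  \<open>ord P - ord L\<close>.\<close>
lemma desingularized_lead_coeff_dvd:
  assumes pid: "pid TYPE('a)" and T: "desingularized \<gamma> \<tau> sQ dQ L T"
    and lcT: "lead_coeff T = smult a g" and "primitive g"
    and P: "P \<in> contraction sQ dQ L" "degree T \<le> degree P"
  shows "(\<sigma> ^^ (degree P - degree T)) g dvd lead_coeff P"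
proof -
  have "T \<noteq> 0" "degree L > 0" "T \<in> contraction sQ dQ L" using T unfolding desingularized_def by auto
  then obtain QT where QT: "fract_poly T = ore_mult sQ dQ QT (fract_poly L)"
    unfolding mem_contraction_iff by blast
  have "L \<noteq> 0" using \<open>degree L > 0\<close> by auto
  have degT: "degree T = degree QT + degree L"
    using degree_ore_multiple[OF QT \<open>T \<noteq> 0\<close> \<open>L \<noteq> 0\<close>] by simp
  obtain Q where Q: "fract_poly P = ore_mult sQ dQ Q (fract_poly L)"
    using P(1) unfolding mem_contraction_iff by blast
  have "P \<noteq> 0" using P(2) degT \<open>degree L > 0\<close> by auto
  then have "Q \<noteq> 0" and degP: "degree P = degree Q + degree L"
    using degree_ore_multiple[OF Q _ \<open>L \<noteq> 0\<close>] by auto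
  obtain \<gamma>' \<tau>' where inv: "inv \<sigma> = ore_sigma \<gamma>' \<tau>'" using inv_sigma by blast
  define g' where "g' = (inv \<sigma> ^^ degree QT) g"
  have "primitive g'" unfolding g'_def
    by (rule primitive_image[of "\<sigma> ^^ degree QT" "inv \<sigma> ^^ degree QT", OF funpow_ore_sigma_smult
          funpow_inverse_cancel[of \<sigma> "inv \<sigma>", OF sigma_inv_sigma] \<open>primitive g\<close>])
  obtain c ps es ks \<alpha> where fac: "lead_coeff L = [:c:] * (\<Prod>i<length ps. (ps ! i) ^ (es ! i))"
    and irr: "\<forall>i<length ps. irreducible (ps ! i) \<and> degree (ps ! i) > 0"
    and dvd: "(\<Prod>i<length ps. (ps ! i) ^ (ks ! i)) * smult a g' dvd smult \<alpha> (lead_coeff L)"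
    and "\<alpha> \<noteq> 0" and nr: "\<forall>i<length ps. \<forall>n > ks ! i. non_removable \<gamma> \<tau> sQ dQ L ((ps ! i) ^ n)"
    using desingularized_dvd_lead_coeff[OF T QT]
    unfolding lcT g'_def inv funpow_ore_sigma_smult by blast
  define W where "W = (inv \<sigma> ^^ degree Q) (lead_coeff P)"
  have lcP: "lead_coeff P = (\<sigma> ^^ degree Q) W"
    unfolding W_def by (simp add: funpow_inverse_cancel sigma_inv_sigma)
  then have "W \<noteq> 0" using \<open>P \<noteq> 0\<close> by (cases "W = 0") (auto simp: funpow_ore_sigma_0)
  have no_removal: "\<forall>i<length ps. \<forall>n > ks ! i. \<not> removes_factor ((ps ! i) ^ n) W (lead_coeff L)"
  proof (intro allI impI notI)
    fix i n assume i: "i < length ps" "ks ! i < n" and "removes_factor ((ps ! i) ^ n) W (lead_coeff L)"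
    moreover have "(ps ! i) ^ n \<noteq> 0" using irr i(1) by auto
    ultimately have "removable_at \<gamma> \<tau> sQ dQ L ((ps ! i) ^ n) (degree Q)"
      using removable_at_if_removes_factor[OF \<open>degree L > 0\<close> Q \<open>Q \<noteq> 0\<close>] unfolding W_def by blast
    then show False using nr i unfolding non_removable_def by blast
  qed
  have "(\<Prod>i<length ps. (ps ! i) ^ (ks ! i)) * g' dvd smult \<alpha> (lead_coeff L)"
    using dvd by (rule dvd_trans[rotated]) (simp add: dvd_smult)
  then have "g' dvd W"
    using primitive_dvd_if_not_removes_factor[OF pid fac irr _ \<open>\<alpha> \<noteq> 0\<close> \<open>primitive g'\<close> _ \<open>W \<noteq> 0\<close> no_removal]
      \<open>L \<noteq> 0\<close> by simp
  then obtain h where "W = g' * h" by blast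
  have "degree Q = (degree P - degree T) + degree QT" using degP degT P(2) by simp
  then have "(\<sigma> ^^ degree Q) g' = (\<sigma> ^^ (degree P - degree T)) ((\<sigma> ^^ degree QT) g')"
    by (simp only: funpow_add o_apply)
  also have "(\<sigma> ^^ degree QT) g' = g"
    unfolding g'_def by (rule funpow_inverse_cancel[of \<sigma> "inv \<sigma>", OF sigma_inv_sigma])
  finally show ?thesis
    using lcP \<open>W = g' * h\<close> by (simp add: funpow_ore_sigma_mult)
qed

lemma contraction_subset_saturation:
  assumes "pid TYPE('a)" "desingularized \<gamma> \<tau> sQ dQ L T"
    and "lead_coeff T = smult a g" "primitive g" "T \<in> Mk sQ dQ k L"
  shows "contraction sQ dQ L \<subseteq> saturation (left_ideal_gen \<sigma> \<delta> (Mk sQ dQ k L)) a"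
proof
  fix P assume "P \<in> contraction sQ dQ L"
  have "\<exists>i. smult ([:a:] ^ i) P \<in> left_ideal_gen \<sigma> \<delta> (Mk sQ dQ k L)"
  proof (rule R.smult_power_in_left_ideal_gen[OF contraction_diff ore_mult_in_contraction])
    show "T \<in> Mk sQ dQ k L" "T \<in> contraction sQ dQ L" using assms(5) by (auto simp: Mk_def)
    show "P' \<in> Mk sQ dQ k L" if "P' \<in> contraction sQ dQ L" "degree P' < degree T" for P'
      using that assms(5) by (auto simp: Mk_def)
    show "lead_coeff T = [:a:] * g" "\<sigma> [:a:] = [:a:]" by (simp_all add: assms(3) ore_sigma_const)
  qed (use \<open>P \<in> contraction sQ dQ L\<close> desingularized_lead_coeff_dvd[OF assms(1-4)] in auto)
  moreover have "[:a:] ^ i = [:a ^ i:]" for i by (induction i) simp_all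
  ultimately show "P \<in> saturation (left_ideal_gen \<sigma> \<delta> (Mk sQ dQ k L)) a"
    unfolding saturation_def by simp
qed

end

theorem mainTheorem1:
  fixes \<gamma> \<tau> a :: "'a::idom" and \<delta> :: "'a poly \<Rightarrow> 'a poly"
    and sQ dQ :: "'a poly fract \<Rightarrow> 'a poly fract"
    and L T :: "'a poly poly" and g :: "'a poly" and k :: nat
  assumes "pid TYPE('a)"
    and "ore_data \<gamma> \<tau> \<delta> sQ dQ"
    and "degree L > 0"
    and "desingularized \<gamma> \<tau> sQ dQ L T"
    and "lead_coeff T = smult a g" and "primitive g"
    and "T \<in> Mk sQ dQ k L"
  shows "contraction sQ dQ L = saturation (left_ideal_gen (ore_sigma \<gamma> \<tau>) \<delta> (Mk sQ dQ k L)) a"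
proof -
  interpret ore_setting \<gamma> \<tau> \<delta> sQ dQ by unfold_locales (fact assms(2))
  have "a \<noteq> 0" using assms(4,5) unfolding desingularized_def by auto
  show ?thesis
    using contraction_subset_saturation[OF assms(1,4-7)] saturation_Mk_subset_contraction[OF \<open>a \<noteq> 0\<close>]
    by blast
qed

end
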